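(* Let $n\geq 3$ and $d\geq 2$ be integers, and let $c,\alpha>0$ be such that for all ${X},{Y}\in\mathbb{R}^{d\times n}$ satisfying $\|{X}\|_{1,2}\leq 1$ and $\|{Y}\|_{1,2}\leq 1$ we have $$c\, d_{\mathcal{G}_{\pm}}^\alpha({X},{Y})\leq d_{\mathcal{D}}({X},{Y}).$$ Then $\alpha\geq 2$.
   Context: A point set is a matrix ${X}\in\mathbb{R}^{d\times n}$ with columns $x_1,\dots,x_n\in\mathbb{R}^d$. The Procrustes Matching metric is $$d_{\mathcal{G}_{\pm}}({X},{Y})=\Big[\min_{(\pi,R,t)\in S_n\times O(d)\times\mathbb{R}^d}\sum_{j=1}^n\|x_j-Ry_{\pi(j)}+t\|_2^2\Big]^{1/2},$$ i.e. the Frobenius distance between ${X}$ and ${Y}$ minimized over column permutations, orthogonal transformations and translations of ${Y}$. The Hard-Gromov-Wasserstein distance is $$d_{\mathcal{D}}({X},{Y})=\min_{\pi\in S_n}\sum_{i,j=1}^n\big|\,\|x_i-x_j\|_2-\|y_{\pi(i)}-y_{\pi(j)}\|_2\,\big|.$$ $\|{X}\|_{1,2}=\max_{1\le i\le n}\|x_i\|_2$. *)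

theory Defs
  imports "HOL-Analysis.Analysis" "HOL-Combinatorics.Permutations"
begin

text \<open>A point set in R^d with n points: columns X j for j < n (values for j >= n are irrelevant).\<close>

definition norm12 :: "nat \<Rightarrow> (nat \<Rightarrow> real^'d) \<Rightarrow> real" where
  "norm12 n X = Max ((\<lambda>j. norm (X j)) ` {..<n})"

text \<open>Procrustes matching metric: minimum over permutations, orthogonal
  transformations and translations (the minimum exists; we take the infimum).\<close>
definition d_PM :: "nat \<Rightarrow> (nat \<Rightarrow> real^'d) \<Rightarrow> (nat \<Rightarrow> real^'d) \<Rightarrow> real" where
  "d_PM n X Y = sqrt (Inf {(\<Sum>j<n. (norm (X j - R (Y (\<pi> j)) + t))\<^sup>2) | \<pi> R t.
        \<pi> permutes {..<n} \<and> orthogonal_transformation R})"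

definition d_HGW :: "nat \<Rightarrow> (nat \<Rightarrow> real^'d) \<Rightarrow> (nat \<Rightarrow> real^'d) \<Rightarrow> real" where
  "d_HGW n X Y = Min {(\<Sum>i<n. \<Sum>j<n. \<bar>dist (X i) (X j) - dist (Y (\<pi> i)) (Y (\<pi> j))\<bar>) | \<pi>.
        \<pi> permutes {..<n}}"

end

theory Submission
  imports Defs
begin

(* The configuration tent h consists of the points -e_i/2 and e_i/2 together with an apex h e_k.
   Raising the apex from height 0 to height h changes every pairwise distance by at most h^2, so
   d_HGW = O(h^2). A rigid motion, however, maps midpoints to midpoints: the flat configuration
   contains the midpoint of two of its points, while in the raised one every point is at least h/2
   away from the midpoint of any two distinct points. Hence every matching has an error of order h
   and d_PM >= h/4. Letting h tend to 0 in c (h/4)^alpha <= n^2 h^2 forces alpha >= 2. *)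

lemma norm_midpoint_defect_le:
  fixes x u v x' u' v' :: "'a::real_normed_vector"
  shows "norm (x' - midpoint u' v')
    \<le> norm (x - midpoint u v) + norm (x - x') + (norm (u - u') + norm (v - v')) / 2"
proof -
  have "x' - midpoint u' v' = (x - midpoint u v) - (x - x') + midpoint (u - u') (v - v')"
    by (simp add: midpoint_def algebra_simps)
  also have "norm \<dots> \<le> norm (x - midpoint u v) + norm (x - x') + norm (midpoint (u - u') (v - v'))"
    using norm_triangle_ineq[of "(x - midpoint u v) - (x - x')" "midpoint (u - u') (v - v')"]
      norm_triangle_ineq4[of "x - midpoint u v" "x - x'"] by linarith
  also have "norm (midpoint (u - u') (v - v')) \<le> (norm (u - u') + norm (v - v')) / 2"
    unfolding midpoint_def using norm_triangle_ineq[of "u - u'" "v - v'"] by simp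
  finally show ?thesis by simp
qed

lemma rigid_midpoint_defect_le:
  assumes "orthogonal_transformation R"
  shows "norm (c - midpoint a b)
    \<le> norm (x - midpoint u v) + norm (x - R c + t) + (norm (u - R a + t) + norm (v - R b + t)) / 2"
proof -
  have "R (c - midpoint a b) = R c - midpoint (R a) (R b)"
    using assms by (simp add: orthogonal_transformation_linear linear_diff midpoint_linear_image)
  also have "\<dots> = (R c - t) - midpoint (R a - t) (R b - t)"
    using scaleR_add_left[of "1/2" "1/2" t] by (simp add: midpoint_def algebra_simps)
  finally have "norm (c - midpoint a b) = norm ((R c - t) - midpoint (R a - t) (R b - t))"
    by (metis assms orthogonal_transformation_norm)
  also have "\<dots> \<le> norm (x - midpoint u v) + norm (x - (R c - t))
      + (norm (u - (R a - t)) + norm (v - (R b - t))) / 2"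
    by (rule norm_midpoint_defect_le)
  finally show ?thesis
    by (simp add: algebra_simps)
qed

lemma rigid_dist_ge:
  assumes "orthogonal_transformation R"
  shows "dist u v - norm (u - R a + t) - norm (v - R b + t) \<le> dist a b"
proof -
  have "dist (R a - t) (R b - t) = dist a b"
    using assms by (simp add: dist_norm orthogonal_transformation_norm
        orthogonal_transformation_linear linear_diff[symmetric])
  moreover have "dist u v \<le> dist u (R a - t) + dist (R a - t) (R b - t) + dist (R b - t) v"
    by (meson add_right_mono dist_triangle order_trans)
  ultimately show ?thesis
    by (simp add: dist_norm algebra_simps norm_minus_commute)
qed

lemma sqrt_sum_squares_le:
  fixes a b :: real
  assumes "0 < a"
  shows "sqrt (a\<^sup>2 + b\<^sup>2) \<le> a + b\<^sup>2 / (2 * a)"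
proof (rule real_le_lsqrt)
  have "(a + b\<^sup>2 / (2 * a))\<^sup>2 = a\<^sup>2 + b\<^sup>2 + (b\<^sup>2 / (2 * a))\<^sup>2"
    using assms by (simp add: power2_eq_square field_simps)
  then show "a\<^sup>2 + b\<^sup>2 \<le> (a + b\<^sup>2 / (2 * a))\<^sup>2"
    by simp
qed (use assms in auto)

lemma exponent_le_if_powr_bounded_near_0:
  fixes K M \<alpha> \<beta> :: real
  assumes "0 < K" and "\<And>e. 0 < e \<Longrightarrow> e \<le> 1 \<Longrightarrow> K * e powr \<alpha> \<le> M * e powr \<beta>"
  shows "\<beta> \<le> \<alpha>"
proof (rule ccontr)
  assume "\<not> \<beta> \<le> \<alpha>"
  then have "((\<lambda>e. M * e powr (\<beta> - \<alpha>)) \<longlongrightarrow> M * 0) (at_right 0)"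
    by (intro tendsto_mult tendsto_const tendsto_zero_powrI)
      (auto intro: tendsto_ident_at eventually_mono[OF eventually_at_right_less])
  moreover have "\<forall>\<^sub>F e in at_right 0. K \<le> M * e powr (\<beta> - \<alpha>)"
    unfolding eventually_at_right_field
  proof (intro exI[of _ 1] conjI allI impI)
    fix e :: real assume "0 < e" "e < 1"
    then have "K * e powr \<alpha> \<le> (M * e powr (\<beta> - \<alpha>)) * e powr \<alpha>"
      using assms(2)[of e] by (simp add: mult.assoc powr_add[symmetric])
    then show "K \<le> M * e powr (\<beta> - \<alpha>)"
      using \<open>0 < e\<close> by simp
  qed simp
  ultimately have "K \<le> M * 0"
    by (rule tendsto_lowerbound) simp
  with \<open>0 < K\<close> show False by simp
qed

lemma d_PM_geI:
  assumes "0 \<le> \<delta>"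
    and "\<And>\<pi> R t. \<pi> permutes {..<n} \<Longrightarrow> orthogonal_transformation R \<Longrightarrow>
           \<delta>\<^sup>2 \<le> (\<Sum>j<n. (norm (X j - R (Y (\<pi> j)) + t))\<^sup>2)"
  shows "\<delta> \<le> d_PM n X Y"
proof -
  let ?S = "{(\<Sum>j<n. (norm (X j - R (Y (\<pi> j)) + t))\<^sup>2) | \<pi> R t.
        \<pi> permutes {..<n} \<and> orthogonal_transformation R}"
  have "?S \<noteq> {}"
    using permutes_id orthogonal_transformation_id by fast
  then have "\<delta>\<^sup>2 \<le> Inf ?S"
    by (rule cInf_greatest) (use assms(2) in fast)
  then show ?thesis
    unfolding d_PM_def using assms(1) real_le_rsqrt by blast
qed

lemma d_HGW_le_identity:
  "d_HGW n X Y \<le> (\<Sum>i<n. \<Sum>j<n. \<bar>dist (X i) (X j) - dist (Y i) (Y j)\<bar>)"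
  unfolding d_HGW_def
proof (rule Min_le)
  show "finite {(\<Sum>i<n. \<Sum>j<n. \<bar>dist (X i) (X j) - dist (Y (\<pi> i)) (Y (\<pi> j))\<bar>) | \<pi>.
      \<pi> permutes {..<n}}"
    by (rule finite_image_set) (simp add: finite_permutations)
qed (rule CollectI, rule exI[of _ id], simp add: permutes_id)

lemma norm12_leI:
  assumes "0 < n" and "\<And>j. j < n \<Longrightarrow> norm (X j) \<le> r"
  shows "norm12 n X \<le> r"
  unfolding norm12_def using assms by (subst Max_le_iff) auto

definition tent :: "'d::finite \<Rightarrow> 'd \<Rightarrow> real \<Rightarrow> nat \<Rightarrow> real^'d" where
  "tent i k h j =
    (if j = 1 then (1/2) *\<^sub>R axis i 1 else if j = 2 then h *\<^sub>R axis k 1 else (-1/2) *\<^sub>R axis i 1)"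

lemma tent_nth:
  assumes "i \<noteq> k"
  shows "tent i k h j $ i = (if j = 1 then 1/2 else if j = 2 then 0 else -1/2)"
    and "tent i k h j $ k = (if j = 2 then h else 0)"
  using assms by (auto simp: tent_def axis_def)

lemma tent_eq_iff:
  assumes "i \<noteq> k" "h \<noteq> 0"
  shows "tent i k h a = tent i k h b \<longleftrightarrow> (a = 1 \<longleftrightarrow> b = 1) \<and> (a = 2 \<longleftrightarrow> b = 2)"
proof
  assume "tent i k h a = tent i k h b"
  then have "tent i k h a $ i = tent i k h b $ i" "tent i k h a $ k = tent i k h b $ k"
    by simp_all
  then show "(a = 1 \<longleftrightarrow> b = 1) \<and> (a = 2 \<longleftrightarrow> b = 2)"
    using assms by (auto simp: tent_nth split: if_splits)
qed (auto simp: tent_def)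

lemma norm_tent_le:
  assumes "0 \<le> h" "h \<le> 1"
  shows "norm (tent i k h j) \<le> 1"
  using assms by (simp add: tent_def)

lemma dist_tent_apex:
  fixes i k :: "'d::finite"
  assumes "i \<noteq> k" "j \<noteq> 2"
  shows "dist (tent i k h 2) (tent i k h j) = sqrt ((1/2)\<^sup>2 + h\<^sup>2)"
proof -
  have "orthogonal (h *\<^sub>R axis k 1) (s *\<^sub>R axis i (1::real) :: real^'d)" for s
    using assms(1) by (simp add: orthogonal_def inner_axis_axis)
  then have "(norm (h *\<^sub>R axis k 1 + s *\<^sub>R axis i (1::real) :: real^'d))\<^sup>2 = s\<^sup>2 + h\<^sup>2" for s
    by (simp add: norm_add_Pythagorean)
  then have "norm (h *\<^sub>R axis k 1 + s *\<^sub>R axis i (1::real) :: real^'d) = sqrt (s\<^sup>2 + h\<^sup>2)" for s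
    by (metis norm_ge_zero real_sqrt_unique)
  from this[of "-1/2"] this[of "1/2"] show ?thesis
    using assms(2) by (simp add: tent_def dist_norm)
qed

lemma dist_tent_change_le:
  fixes i k :: "'d::finite"
  assumes "i \<noteq> k"
  shows "\<bar>dist (tent i k 0 a) (tent i k 0 b) - dist (tent i k h a) (tent i k h b)\<bar> \<le> h\<^sup>2"
proof -
  have apex: "\<bar>dist (tent i k 0 2) (tent i k 0 j) - dist (tent i k h 2) (tent i k h j)\<bar> \<le> h\<^sup>2"
    if "j \<noteq> 2" for j
  proof -
    have "1/2 \<le> sqrt ((1/2)\<^sup>2 + h\<^sup>2)"
      by (rule real_le_rsqrt) simp
    moreover have "sqrt ((1/2)\<^sup>2 + h\<^sup>2) \<le> 1/2 + h\<^sup>2"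
      using sqrt_sum_squares_le[of "1/2" h] by simp
    ultimately show ?thesis
      using that assms by (simp add: dist_tent_apex)
  qed
  have "tent i k 0 j = tent i k h j" if "j \<noteq> 2" for j
    using that by (simp add: tent_def)
  then show ?thesis
    using apex[of a] apex[of b] by (cases "a = 2"; cases "b = 2") (auto simp: dist_commute)
qed

lemma d_HGW_tent_le:
  fixes i k :: "'d::finite"
  assumes "i \<noteq> k"
  shows "d_HGW n (tent i k 0) (tent i k h) \<le> (real n * h)\<^sup>2"
proof -
  have "d_HGW n (tent i k 0) (tent i k h)
      \<le> (\<Sum>a<n. \<Sum>b<n. \<bar>dist (tent i k 0 a) (tent i k 0 b) - dist (tent i k h a) (tent i k h b)\<bar>)"
    by (rule d_HGW_le_identity)
  also have "\<dots> \<le> (\<Sum>a<n. \<Sum>b<n. h\<^sup>2)"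
    using assms by (intro sum_mono dist_tent_change_le)
  finally show ?thesis
    by (simp add: power2_eq_square mult_ac)
qed

lemma tent_midpoint_defect_ge:
  fixes i k :: "'d::finite"
  assumes "i \<noteq> k" "0 < h" "h \<le> 1" "tent i k h a \<noteq> tent i k h b"
  shows "h / 2 \<le> norm (tent i k h c - midpoint (tent i k h a) (tent i k h b))"
proof -
  let ?v = "tent i k h c - midpoint (tent i k h a) (tent i k h b)"
  have "h / 2 \<le> \<bar>?v $ i\<bar> \<or> h / 2 \<le> \<bar>?v $ k\<bar>"
    using assms by (auto simp: tent_eq_iff tent_nth midpoint_def)
  then show ?thesis
    using component_le_norm_cart[of ?v i] component_le_norm_cart[of ?v k] by linarith
qed

lemma d_PM_tent_ge:
  fixes i k :: "'d::finite"
  assumes "i \<noteq> k" "0 < h" "h \<le> 1" "3 \<le> n"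
  shows "h / 4 \<le> d_PM n (tent i k 0) (tent i k h)"
proof (rule d_PM_geI)
  fix \<pi> :: "nat \<Rightarrow> nat" and R :: "real^'d \<Rightarrow> real^'d" and t :: "real^'d"
  assume R: "orthogonal_transformation R"
  define E where "E j = norm (tent i k 0 j - R (tent i k h (\<pi> j)) + t)" for j
  have "\<exists>j<3. h / 4 \<le> E j"
  proof (rule ccontr)
    assume "\<not> (\<exists>j<3. h / 4 \<le> E j)"
    then have "E j < h / 4" if "j < 3" for j
      using that not_le by blast
    then have small: "E 0 < h / 4" "E 1 < h / 4" "E 2 < h / 4"
      by simp_all
    let ?A = "tent i k h (\<pi> 0)" and ?B = "tent i k h (\<pi> 1)" and ?C = "tent i k h (\<pi> 2)"
    have "dist (tent i k 0 0) (tent i k 0 1) - E 0 - E 1 \<le> dist ?A ?B"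
      unfolding E_def using R by (rule rigid_dist_ge)
    moreover have "dist (tent i k 0 0) (tent i k 0 1) = 1"
      by (simp add: tent_def dist_norm flip: scaleR_diff_left)
    ultimately have "?A \<noteq> ?B"
      using small \<open>h \<le> 1\<close> by auto
    then have "h / 2 \<le> norm (?C - midpoint ?A ?B)"
      using assms by (intro tent_midpoint_defect_ge)
    also have "\<dots> \<le> norm (tent i k 0 2 - midpoint (tent i k 0 0) (tent i k 0 1))
        + E 2 + (E 0 + E 1) / 2"
      unfolding E_def using R by (rule rigid_midpoint_defect_le)
    also have "tent i k 0 2 - midpoint (tent i k 0 0) (tent i k 0 1) = 0"
      by (simp add: tent_def midpoint_def)
    finally have "h / 2 \<le> E 2 + (E 0 + E 1) / 2"
      by simp
    with small show False
      by argo
  qed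
  then obtain m where "m < 3" "h / 4 \<le> E m"
    by blast
  then have "(h / 4)\<^sup>2 \<le> (E m)\<^sup>2"
    using \<open>0 < h\<close> by (intro power_mono) auto
  also have "\<dots> \<le> (\<Sum>j<n. (E j)\<^sup>2)"
    using \<open>m < 3\<close> \<open>3 \<le> n\<close> by (intro member_le_sum) auto
  finally show "(h / 4)\<^sup>2 \<le> (\<Sum>j<n. (norm (tent i k 0 j - R (tent i k h (\<pi> j)) + t))\<^sup>2)"
    by (simp add: E_def)
qed (use \<open>0 < h\<close> in simp)

theorem theorem2:
  fixes n :: nat and c \<alpha> :: real
  assumes "n \<ge> 3" and "CARD('d::finite) \<ge> 2"
    and "c > 0" and "\<alpha> > 0"
    and "\<forall>X Y :: nat \<Rightarrow> real^'d. norm12 n X \<le> 1 \<longrightarrow> norm12 n Y \<le> 1 \<longrightarrow>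
           c * (d_PM n X Y) powr \<alpha> \<le> d_HGW n X Y"
  shows "\<alpha> \<ge> 2"
proof -
  obtain i k :: 'd where "i \<noteq> k"
    using assms(2) card_le_Suc0_iff_eq[of "UNIV :: 'd set"] by force
  have "c / 4 powr \<alpha> * e powr \<alpha> \<le> (real n)\<^sup>2 * e powr 2" if "0 < e" "e \<le> 1" for e
  proof -
    have norms: "norm12 n (tent i k 0) \<le> 1" "norm12 n (tent i k e) \<le> 1"
      using that assms(1) by (intro norm12_leI norm_tent_le; simp)+
    have "c * (e / 4) powr \<alpha> \<le> c * d_PM n (tent i k 0) (tent i k e) powr \<alpha>"
      using d_PM_tent_ge[OF \<open>i \<noteq> k\<close> that assms(1)] that assms(3,4)
      by (intro mult_left_mono powr_mono2) auto
    also have "\<dots> \<le> d_HGW n (tent i k 0) (tent i k e)"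
      using assms(5) norms by blast
    also have "\<dots> \<le> (real n * e)\<^sup>2"
      using \<open>i \<noteq> k\<close> by (rule d_HGW_tent_le)
    finally show ?thesis
      using that by (simp add: powr_divide power_mult_distrib powr_numeral)
  qed
  from exponent_le_if_powr_bounded_near_0[OF _ this] show ?thesis
    using assms(3) by simp
qed

end
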